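(* Let $\lambda$ be a Perron number and let $f_\lambda:\ast_{mM}\to\ast_{mM}$ be the star map constructed below. Then its split map $S(f_\lambda):S(\ast_{mM})\to S(\ast_{mM})$ is mixing; i.e. for every edge $y_I$ of $S(\ast_{mM})$ there exists $L$ such that the edge path $S(f_\lambda)^L(y_I)$ traverses every edge of $S(\ast_{mM})$.
   Context: A Perron number is a real algebraic integer $\lambda$ with $\lambda>|\lambda_i|$ for every other Galois conjugate $\lambda_i$. Construction of $f_\lambda$: let $d=\deg\lambda$, $\mathcal{O}_\lambda$ the ring of integers of $\mathbb{Q}(\lambda)$, $V_\lambda=\mathbb{Q}(\lambda)\otimes_{\mathbb{Q}}\mathbb{R}\cong\mathbb{R}^d$, on which multiplication by $\lambda$ is linear with unit eigenvectors $v_1,\dots,v_d$, $v_1$ for the eigenvalue $\lambda$. Let $K_\lambda=\{\sum a_iv_i: a_1>0,\ a_1>|a_i|\ (i\ge2)\}$, let $KR_\lambda$ be a closed convex polyhedral cone generated by finitely many elements of $\mathcal{O}_\lambda$ with $\lambda K_\lambda\subset KR_\lambda\subset K_\lambda$, and $S_\lambda=(\mathcal{O}_\lambda\cap KR_\lambda)\setminus\{0\}$, an additive semigroup generated by finitely many elements $s_1,\dots,s_m$ (viewed as positive real numbers via $\mathbb{Q}(\lambda)\subset\mathbb{R}$). Choose positive integers $N>n_0$ with $\lambda^N\equiv\lambda^{n_0}\pmod{2\mathcal{O}_\lambda}$; put $T=s_1+\dots+s_m$ and $g_k=\lambda^{n_0}s_k+2(T+\lambda s_k)$. Choose an integer $p\ge0$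 so that $M=p(N-n_0)+N$ satisfies $\lambda^Ms_k\in g_k+S_\lambda$ for all $k$; then there are nonnegative integers $e^{(k)}_i$ with $\lambda^Ms_k=\sum_{i=1}^m(2e^{(k)}_i+2)s_i+2\lambda s_k+\lambda^{n_0}s_k$. The star $\ast_{mM}=K_{1,mM}$ has edges $(s_k,i)$, $1\le k\le m$, $1\le i\le M$, oriented from center to tip, of length $\lambda^{i-1}s_k$. The graph map $f_\lambda$ fixes the center, sends $(s_k,i)\mapsto(s_k,i+1)$ for $i<M$, and sends $(s_k,M)$ to the edge path which first traverses $(s_k,1)$ back and forth $e^{(k)}_k+1$ times (i.e. $2e^{(k)}_k+2$ traversals), then, for each $j\ne k$ in some fixed order, traverses $(s_j,1)$ back and forth $e^{(k)}_j+1$ times, then traverses $(s_k,2)$ out and back once, and finally traverses $(s_k,n_0+1)$ once. Split map: prototype graph $P_7$ has vertices $v_0,v_1$ and edges $a,\dots,g$ oriented $v_0\to v_1$ (uppercase = reversed); $\phi_1=\mathrm{id}$ and for $m'\ge0$, $\phi_{3+2m'}$: $a\mapsto aG(aB)^{m'}a$, $b\mapsto bD(bC)^{m'}b$, $c\mapsto cF(cA)^{m'}c$, $d\mapsto aB(aB)^{m'}a$, $e\mapsto cB(aB)^{m'}a$, $f\mapsto aC(aB)^{m'}a$, $g\mapsto bE(bA)^{m'}b$. The split graph replaces each edge $x_I$ of the star by seven parallel edges $a_I,\dots,g_I$; the split map sends $y_I$ to the path obtained from the word $\phi_{\ell}(y)$, $\ell$ the number of edges of $f_\lambda(x_I)$,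 by giving its $t$-th letter the subscript of the $t$-th edge of $f_\lambda(x_I)$. A graph map is mixing if some positive power of its transition matrix (entry $(i,j)$ = number of times edge $i$ occurs in the image path of edge $j$) is positive. *)

theory Defs
  imports Complex_Main "HOL-Computational_Algebra.Computational_Algebra"
begin

definition alg_integer :: "real \<Rightarrow> bool" where
  "alg_integer x \<longleftrightarrow> (\<exists>p :: int poly. lead_coeff p = 1 \<and> poly (map_poly of_int p) x = 0)"

definition galois_conjugates :: "real \<Rightarrow> complex set" where
  "galois_conjugates l = {z. \<exists>p :: rat poly. irreducible p \<and>
       poly (map_poly of_rat p) l = 0 \<and> poly (map_poly of_rat p) z = 0}"

definition perron :: "real \<Rightarrow> bool" where
  "perron l \<longleftrightarrow> alg_integer l \<and>
     (\<forall>z \<in> galois_conjugates l. z \<noteq> complex_of_real l \<longrightarrow> cmod z < l)"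

definition Qfield :: "real \<Rightarrow> real set" where
  "Qfield l = {poly (map_poly of_rat q) l | q :: rat poly. True}"

definition ring_of_integers :: "real \<Rightarrow> real set" where
  "ring_of_integers l = {x \<in> Qfield l. alg_integer x}"

text \<open>A graph map is given by a finite set of (oriented) edges and, for every edge,
  its image edge path: a list of (edge, orientation) pairs, True = traversed along
  the orientation, False = traversed backwards (uppercase letter).\<close>

definition trans_entry :: "('e \<Rightarrow> ('e \<times> bool) list) \<Rightarrow> 'e \<Rightarrow> 'e \<Rightarrow> nat" where
  "trans_entry img i j = count_list (map fst (img j)) i"

fun trans_pow :: "'e set \<Rightarrow> ('e \<Rightarrow> ('e \<times> bool) list) \<Rightarrow> nat \<Rightarrow> 'e \<Rightarrow> 'e \<Rightarrow> nat" where
  "trans_pow E img 0 i j = (if i = j then 1 else 0)"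
| "trans_pow E img (Suc n) i j = (\<Sum>w\<in>E. trans_entry img i w * trans_pow E img n w j)"

definition mixing :: "'e set \<Rightarrow> ('e \<Rightarrow> ('e \<times> bool) list) \<Rightarrow> bool" where
  "mixing E img \<longleftrightarrow> (\<exists>L > 0. \<forall>i\<in>E. \<forall>j\<in>E. trans_pow E img L i j > 0)"

text \<open>Edges of the star are pairs (k,i), 0 <= k < m (index of s_k, 0-based), 1 <= i <= M.\<close>
definition star_edges :: "nat \<Rightarrow> nat \<Rightarrow> (nat \<times> nat) set" where
  "star_edges m M = {(k, i). k < m \<and> 1 \<le> i \<and> i \<le> M}"

definition back_forth :: "nat \<Rightarrow> nat \<times> nat \<Rightarrow> ((nat \<times> nat) \<times> bool) list" where
  "back_forth r x = concat (replicate r [(x, True), (x, False)])"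

text \<open>e k j = e^{(k)}_j ; ord k = the fixed order of the indices j ~= k.\<close>
definition star_img ::
  "nat \<Rightarrow> nat \<Rightarrow> (nat \<Rightarrow> nat \<Rightarrow> nat) \<Rightarrow> (nat \<Rightarrow> nat list) \<Rightarrow> nat \<times> nat \<Rightarrow> ((nat \<times> nat) \<times> bool) list" where
  "star_img M n0 e ord x = (case x of (k, i) \<Rightarrow>
     if i < M then [((k, i + 1), True)]
     else back_forth (e k k + 1) (k, 1)
          @ concat (map (\<lambda>j. back_forth (e k j + 1) (j, 1)) (ord k))
          @ [((k, 2), True), ((k, 2), False), ((k, n0 + 1), True)])"

datatype letter = La | Lb | Lc | Ld | Le | Lf | Lg

text \<open>(x, True) = lowercase letter x, (x, False) = uppercase (reversed) letter.\<close>
definition rep :: "nat \<Rightarrow> 'a list \<Rightarrow> 'a list" where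
  "rep n w = concat (replicate n w)"

definition phi_odd :: "nat \<Rightarrow> letter \<Rightarrow> (letter \<times> bool) list" where
  "phi_odd m' y = (case y of
      La \<Rightarrow> [(La,True),(Lg,False)] @ rep m' [(La,True),(Lb,False)] @ [(La,True)]
    | Lb \<Rightarrow> [(Lb,True),(Ld,False)] @ rep m' [(Lb,True),(Lc,False)] @ [(Lb,True)]
    | Lc \<Rightarrow> [(Lc,True),(Lf,False)] @ rep m' [(Lc,True),(La,False)] @ [(Lc,True)]
    | Ld \<Rightarrow> [(La,True),(Lb,False)] @ rep m' [(La,True),(Lb,False)] @ [(La,True)]
    | Le \<Rightarrow> [(Lc,True),(Lb,False)] @ rep m' [(La,True),(Lb,False)] @ [(La,True)]
    | Lf \<Rightarrow> [(La,True),(Lc,False)] @ rep m' [(La,True),(Lb,False)] @ [(La,True)]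
    | Lg \<Rightarrow> [(Lb,True),(Le,False)] @ rep m' [(Lb,True),(La,False)] @ [(Lb,True)])"

text \<open>phi_1 = id, phi_{3+2m'} as above (only these lengths occur).\<close>
definition phi :: "nat \<Rightarrow> letter \<Rightarrow> (letter \<times> bool) list" where
  "phi l y = (if l = 1 then [(y, True)] else phi_odd ((l - 3) div 2) y)"

definition split_edges :: "nat \<Rightarrow> nat \<Rightarrow> (letter \<times> (nat \<times> nat)) set" where
  "split_edges m M = UNIV \<times> star_edges m M"

text \<open>The t-th letter of phi_l(y) gets the subscript of the t-th edge of f(x_I).\<close>
definition split_img ::
  "nat \<Rightarrow> nat \<Rightarrow> (nat \<Rightarrow> nat \<Rightarrow> nat) \<Rightarrow> (nat \<Rightarrow> nat list) \<Rightarrow> letter \<times> (nat \<times> nat)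
     \<Rightarrow> ((letter \<times> (nat \<times> nat)) \<times> bool) list" where
  "split_img M n0 e ord yx = (case yx of (y, x) \<Rightarrow>
     (let p = star_img M n0 e ord x in
        map2 (\<lambda>(z, ori) (ed, _). ((z, ed), ori)) (phi (length p) y) p))"

end

theory Submission
  imports Defs
begin

text \<open>Draw an arrow from edge j to edge i whenever i occurs in the image path of j. Climbing a
  column, the split map sends (y, (k, i)) to (y, (k, i + 1)). The top edge (y, (k, M)) leads back to
  (z, (k, 1)) for the two leading letters z of \<phi>(y), and these letter moves connect all seven
  letters. Since a occupies every even position of \<phi>(a), the top edge (a, (k, M)) also leads
  to (a, (j, 1)) for every j and to (a, (k, 2)). So the arrow graph is strongly connected and has
  closed walks of the coprime lengths M and M - 1 at (a, (0, M)), which makes a power of the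
  transition matrix positive.\<close>

definition transition_rel :: "'e set \<Rightarrow> ('e \<Rightarrow> ('e \<times> bool) list) \<Rightarrow> 'e rel" where
  "transition_rel E img = {(j, i). j \<in> E \<and> i \<in> fst ` set (img j)}"

lemma finite_transition_rel:
  assumes "finite E" shows "finite (transition_rel E img)"
proof (rule finite_subset)
  show "transition_rel E img \<subseteq> E \<times> (\<Union>j\<in>E. fst ` set (img j))"
    by (auto simp: transition_rel_def)
qed (use assms in auto)

lemma trans_entry_pos_iff: "0 < trans_entry img i j \<longleftrightarrow> i \<in> fst ` set (img j)"
  by (simp add: trans_entry_def count_list_0_iff flip: neq0_conv)

lemma trans_pow_pos_iff:
  assumes "finite E"
  shows "0 < trans_pow E img n i j \<longleftrightarrow> (j, i) \<in> transition_rel E img ^^ n"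
proof (induction n arbitrary: i)
  case (Suc n)
  have "0 < trans_pow E img (Suc n) i j \<longleftrightarrow>
      (\<exists>w\<in>E. 0 < trans_entry img i w \<and> 0 < trans_pow E img n w j)"
    using assms by (simp flip: neq0_conv)
  also have "\<dots> \<longleftrightarrow> (\<exists>w. (j, w) \<in> transition_rel E img ^^ n \<and> (w, i) \<in> transition_rel E img)"
    by (simp add: Suc.IH trans_entry_pos_iff transition_rel_def) blast
  finally show ?case by auto
qed simp

lemma mixing_iff_relpow:
  assumes "finite E"
  shows "mixing E img \<longleftrightarrow> (\<exists>L>0. E \<times> E \<subseteq> transition_rel E img ^^ L)"
  using assms by (auto simp: mixing_def trans_pow_pos_iff)

lemma closed_walk_relpow_mult:
  assumes "(h, h) \<in> R ^^ n" shows "(h, h) \<in> R ^^ (a * n)"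
proof (induction a)
  case (Suc a)
  then show ?case using relpow_trans[OF assms Suc.IH] by simp
qed simp

lemma sum_of_consecutive_multiples:
  fixes n t :: nat
  assumes "n * n \<le> t"
  shows "\<exists>a b. t = a * n + b * Suc n"
proof (cases "n = 0")
  case False
  define q r where "q = t div n" and "r = t mod n"
  have "r < n" using False by (simp add: r_def)
  have qr: "t = q * n + r" by (simp add: q_def r_def)
  have "n \<le> q"
  proof (rule ccontr)
    assume "\<not> n \<le> q"
    then have "(q + 1) * n \<le> n * n" by (intro mult_le_mono1) simp
    then show False using assms qr \<open>r < n\<close> by simp
  qed
  with \<open>r < n\<close> have "r \<le> q" by simp
  then obtain d where "q = r + d" by (auto simp: le_iff_add)
  then have "t = d * n + r * Suc n" using qr by (simp add: algebra_simps)
  then show ?thesis by blast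
qed auto

lemma closed_walks_of_large_length:
  assumes "(h, h) \<in> R ^^ n" "(h, h) \<in> R ^^ Suc n" "n * n \<le> t"
  shows "(h, h) \<in> R ^^ t"
proof -
  obtain a b where "t = a * n + b * Suc n"
    using sum_of_consecutive_multiples[OF assms(3)] by blast
  then show ?thesis
    using relpow_trans[OF closed_walk_relpow_mult[OF assms(1)] closed_walk_relpow_mult[OF assms(2)]]
    by simp
qed

lemma relpow_total_if_consecutive_closed_walks:
  assumes "finite R" "E \<times> E \<subseteq> R\<^sup>*" "h \<in> E"
    and "(h, h) \<in> R ^^ n" "(h, h) \<in> R ^^ Suc n"
  shows "\<exists>L>0. E \<times> E \<subseteq> R ^^ L"
proof (intro exI conjI)
  define L where "L = 2 * card R + n * n"
  have "R \<noteq> {}" using assms(5) by (auto elim: relpow_Suc_E)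
  then show "0 < L" using assms(1) by (simp add: L_def card_gt_0_iff)
  show "E \<times> E \<subseteq> R ^^ L"
  proof safe
    fix x y assume "x \<in> E" "y \<in> E"
    then have "(x, h) \<in> R\<^sup>*" "(h, y) \<in> R\<^sup>*" using assms(2,3) by auto
    then obtain a b where "a \<le> card R" "(x, h) \<in> R ^^ a" "b \<le> card R" "(h, y) \<in> R ^^ b"
      unfolding rtrancl_finite_eq_relpow[OF assms(1)] by blast
    moreover have "(h, h) \<in> R ^^ (L - a - b)"
      using calculation by (intro closed_walks_of_large_length[OF assms(4,5)]) (simp add: L_def)
    ultimately have "(x, y) \<in> R ^^ (a + (L - a - b) + b)"
      by (blast intro: relpow_trans)
    then show "(x, y) \<in> R ^^ L" using \<open>a \<le> card R\<close> \<open>b \<le> card R\<close> by (simp add: L_def)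
  qed
qed

lemma length_phi_odd: "length (phi_odd n y) = 2 * n + 3"
  by (cases y) (simp_all add: phi_odd_def rep_def length_concat sum_list_replicate)

lemma length_phi: "odd l \<Longrightarrow> length (phi l y) = l"
  by (auto simp: phi_def length_phi_odd elim!: oddE)

lemma nth_rep_pair: "t < 2 * n \<Longrightarrow> rep n [u, v] ! t = (if even t then u else v)"
proof (induction n arbitrary: t)
  case (Suc n)
  then show ?case by (auto simp: rep_def nth_Cons split: nat.split)
qed simp

lemma phi_La_even_position:
  assumes "odd l" "even t" "t < l"
  shows "fst (phi l La ! t) = La"
proof (cases "l = 1")
  case False
  define n where "n = (l - 3) div 2"
  have "phi l La = [(La, True), (Lg, False)] @ rep n [(La, True), (Lb, False)] @ [(La, True)]"
    using False by (simp add: phi_def phi_odd_def n_def)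
  moreover have "l = 2 * n + 3" using assms(1) False unfolding n_def by presburger
  then have "t = 0 \<or> (2 \<le> t \<and> t - 2 < 2 * n) \<or> t = 2 * n + 2"
    using assms(2,3) by presburger
  ultimately show ?thesis
    using assms(2)
    by (auto simp: nth_append rep_def length_concat sum_list_replicate nth_rep_pair[unfolded rep_def])
qed (use assms in \<open>simp add: phi_def\<close>)

lemma take_2_phi: "odd l \<Longrightarrow> 3 \<le> l \<Longrightarrow> take 2 (phi l y) = take 2 (phi 3 y)"
  by (cases y) (simp_all add: phi_def phi_odd_def)

definition letter_rel :: "letter rel" where
  "letter_rel = {(y, z). z \<in> fst ` set (take 2 (phi 3 y))}"

lemma letter_rel_total: "(y, z) \<in> letter_rel\<^sup>*"
proof -
  have cycle: "(La, Lg) \<in> letter_rel" "(Lg, Le) \<in> letter_rel" "(Le, Lc) \<in> letter_rel"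
    "(Lc, Lf) \<in> letter_rel" "(Lf, La) \<in> letter_rel"
    and detour: "(Lg, Lb) \<in> letter_rel" "(Lb, Ld) \<in> letter_rel" "(Ld, La) \<in> letter_rel"
    by (simp_all add: letter_rel_def phi_def phi_odd_def rep_def)
  have "(La, x) \<in> letter_rel\<^sup>* \<and> (x, La) \<in> letter_rel\<^sup>*" for x
    by (cases x) (meson cycle detour r_into_rtrancl rtrancl_trans)+
  then show ?thesis by (meson rtrancl_trans)
qed

lemma UNIV_letter: "(UNIV :: letter set) = {La, Lb, Lc, Ld, Le, Lf, Lg}"
  using letter.exhaust by auto

lemma length_back_forths:
  "length (concat (map (\<lambda>j. back_forth (c j) (j, 1)) js)) = 2 * sum_list (map c js)"
  by (induction js) (simp_all add: back_forth_def length_concat sum_list_replicate)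

lemma back_forths_even_position:
  assumes "j \<in> set js" "0 < c j"
  shows "\<exists>t. even t \<and> t < length (concat (map (\<lambda>j. back_forth (c j) (j, 1)) js)) \<and>
           fst (concat (map (\<lambda>j. back_forth (c j) (j, 1)) js) ! t) = (j, 1)"
  using assms(1)
proof (induction js)
  case (Cons i js)
  show ?case
  proof (cases "i = j")
    case True
    with assms(2) show ?thesis
      by (intro exI[of _ 0]) (auto simp: back_forth_def gr0_conv_Suc)
  next
    case False
    with Cons obtain t where "even t" "t < length (concat (map (\<lambda>j. back_forth (c j) (j, 1)) js))"
      "fst (concat (map (\<lambda>j. back_forth (c j) (j, 1)) js) ! t) = (j, 1)" by auto
    then show ?thesis
      using length_back_forths[of c "[i]"]
      by (intro exI[of _ "2 * c i + t"]) (simp add: nth_append)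
  qed
qed simp

lemma star_img_below_top: "i < M \<Longrightarrow> star_img M n0 e ord (k, i) = [((k, i + 1), True)]"
  by (simp add: star_img_def)

lemma star_img_top:
  "star_img M n0 e ord (k, M) = concat (map (\<lambda>j. back_forth (e k j + 1) (j, 1)) (k # ord k))
     @ [((k, 2), True), ((k, 2), False), ((k, n0 + 1), True)]"
  by (simp add: star_img_def)

lemma odd_length_star_img: "odd (length (star_img M n0 e ord x))"
  using length_back_forths[of "\<lambda>j. e (fst x) j + 1" "ord (fst x)"]
  by (auto simp: star_img_def back_forth_def length_concat sum_list_replicate split: prod.split)

lemma split_img_occurrence:
  assumes "t < length (star_img M n0 e ord x)"
  shows "(fst (phi (length (star_img M n0 e ord x)) y ! t), fst (star_img M n0 e ord x ! t))
           \<in> fst ` set (split_img M n0 e ord (y, x))"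
proof -
  let ?p = "star_img M n0 e ord x"
  have "length (phi (length ?p) y) = length ?p"
    by (rule length_phi[OF odd_length_star_img])
  then have "fst (split_img M n0 e ord (y, x) ! t) = (fst (phi (length ?p) y ! t), fst (?p ! t))"
    and "t < length (split_img M n0 e ord (y, x))"
    using assms by (simp_all add: split_img_def Let_def split_beta)
  then show ?thesis by (metis nth_mem image_eqI)
qed

locale split_star =
  fixes m M n0 :: nat and e :: "nat \<Rightarrow> nat \<Rightarrow> nat" and ord :: "nat \<Rightarrow> nat list"
  assumes m_pos: "0 < m" and M_ge_2: "2 \<le> M"
    and ord_complete: "\<And>k j. k < m \<Longrightarrow> j < m \<Longrightarrow> j \<noteq> k \<Longrightarrow> j \<in> set (ord k)"
begin

abbreviation R :: "(letter \<times> nat \<times> nat) rel" where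
  "R \<equiv> transition_rel (split_edges m M) (split_img M n0 e ord)"

lemma mem_split_edges: "(y, (k, i)) \<in> split_edges m M \<longleftrightarrow> k < m \<and> 1 \<le> i \<and> i \<le> M"
  by (simp add: split_edges_def star_edges_def)

lemma finite_split_edges: "finite (split_edges m M)"
proof (rule finite_subset)
  show "split_edges m M \<subseteq> UNIV \<times> ({..<m} \<times> {..M})"
    by (auto simp: split_edges_def star_edges_def)
qed (simp add: UNIV_letter)

lemma column_relpow:
  assumes "k < m" "1 \<le> i" "i + d \<le> M"
  shows "((y, (k, i)), (y, (k, i + d))) \<in> R ^^ d"
  using assms(3)
proof (induction d)
  case (Suc d)
  have "((y, (k, i + d)), (y, (k, i + Suc d))) \<in> R"
    using Suc.prems assms(1,2)
    by (simp add: transition_rel_def mem_split_edges split_img_def star_img_below_top phi_def)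
  with Suc show ?case by (auto intro: relpow_Suc_I)
qed simp

lemma column_rtrancl:
  assumes "k < m" "1 \<le> i" "i \<le> j" "j \<le> M"
  shows "((y, (k, i)), (y, (k, j))) \<in> R\<^sup>*"
  using column_relpow[OF assms(1,2), of "j - i" y] assms(3,4) by (auto intro: relpow_imp_rtrancl)

lemma top_step:
  assumes "k < m" "t < length (star_img M n0 e ord (k, M))"
  shows "((y, (k, M)), (fst (phi (length (star_img M n0 e ord (k, M))) y ! t),
            fst (star_img M n0 e ord (k, M) ! t))) \<in> R"
  using split_img_occurrence[OF assms(2)] assms(1) M_ge_2
  by (simp add: transition_rel_def mem_split_edges)

lemma top_to_bottom:
  assumes "k < m" "(y, z) \<in> letter_rel"
  shows "((y, (k, M)), (z, (k, 1))) \<in> R"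
proof -
  let ?p = "star_img M n0 e ord (k, M)"
  have "3 \<le> length ?p" by (simp add: star_img_top)
  then have "take 2 (phi (length ?p) y) = take 2 (phi 3 y)"
    by (intro take_2_phi odd_length_star_img)
  with assms(2) have "z \<in> fst ` set (take 2 (phi (length ?p) y))"
    by (simp add: letter_rel_def)
  then obtain t where t: "t < 2" "z = fst (phi (length ?p) y ! t)"
    by (auto simp: in_set_conv_nth)
  have "fst (?p ! 0) = (k, 1)" "fst (?p ! 1) = (k, 1)"
    by (simp_all add: star_img_top back_forth_def)
  with t have "fst (?p ! t) = (k, 1)" by (auto simp: less_2_cases_iff)
  with t show ?thesis
    using top_step[OF assms(1), of t y] \<open>3 \<le> length ?p\<close> by simp
qed

lemma top_La_even_step:
  assumes "k < m" "even t" "t < length (star_img M n0 e ord (k, M))"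
  shows "((La, (k, M)), (La, fst (star_img M n0 e ord (k, M) ! t))) \<in> R"
  using top_step[OF assms(1,3), of La] phi_La_even_position[OF odd_length_star_img assms(2,3)]
  by simp

lemma top_La_to_bottom:
  assumes "k < m" "j < m"
  shows "((La, (k, M)), (La, (j, 1))) \<in> R"
proof -
  define B where "B = concat (map (\<lambda>j. back_forth (e k j + 1) (j, 1)) (k # ord k))"
  have "j \<in> set (k # ord k)" using ord_complete[OF assms] by auto
  then have "\<exists>t. even t \<and> t < length B \<and> fst (B ! t) = (j, 1)"
    unfolding B_def by (rule back_forths_even_position) simp
  then obtain t where t: "even t" "t < length B" "fst (B ! t) = (j, 1)" by blast
  from top_La_even_step[OF assms(1) t(1), unfolded star_img_top, folded B_def]
  show ?thesis using t(2,3) by (simp add: nth_append)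
qed

lemma top_La_to_second:
  assumes "k < m"
  shows "((La, (k, M)), (La, (k, 2))) \<in> R"
proof -
  define B where "B = concat (map (\<lambda>j. back_forth (e k j + 1) (j, 1)) (k # ord k))"
  have "even (length B)" unfolding B_def length_back_forths by simp
  from top_La_even_step[OF assms this, unfolded star_img_top, folded B_def]
  show ?thesis by simp
qed

lemma bottoms_connected:
  assumes "k < m"
  shows "((y, (k, 1)), (z, (k, 1))) \<in> R\<^sup>*"
proof -
  have "((y, (k, 1)), (z, (k, 1))) \<in> R\<^sup>*" if "(y, z) \<in> letter_rel\<^sup>*" for z
    using that
  proof (induction rule: rtrancl_induct)
    case (step z z')
    note step.IH
    also have "((z, (k, 1)), (z, (k, M))) \<in> R\<^sup>*"
      using column_rtrancl[OF assms] M_ge_2 by simp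
    also have "((z, (k, M)), (z', (k, 1))) \<in> R"
      by (rule top_to_bottom[OF assms step.hyps(2)])
    finally show ?case .
  qed simp
  then show ?thesis using letter_rel_total by blast
qed

lemma reaches_anchor:
  assumes "x \<in> split_edges m M"
  shows "(x, (La, (0, M))) \<in> R\<^sup>*"
proof -
  obtain y k i where x: "x = (y, (k, i))" by (rule prod_cases3)
  have k: "k < m" "1 \<le> i" "i \<le> M" using assms by (simp_all add: x mem_split_edges)
  have "(x, (y, (k, M))) \<in> R\<^sup>*" using column_rtrancl k by (simp add: x)
  also have "((y, (k, M)), (fst (phi 3 y ! 0), (k, 1))) \<in> R"
    by (rule top_to_bottom[OF k(1)]) (cases y; simp add: letter_rel_def phi_def phi_odd_def)
  also have "((fst (phi 3 y ! 0), (k, 1)), (La, (k, 1))) \<in> R\<^sup>*"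
    by (rule bottoms_connected[OF k(1)])
  also have "((La, (k, 1)), (La, (k, M))) \<in> R\<^sup>*" using column_rtrancl k M_ge_2 by simp
  also have "((La, (k, M)), (La, (0, 1))) \<in> R" by (rule top_La_to_bottom[OF k(1) m_pos])
  also have "((La, (0, 1)), (La, (0, M))) \<in> R\<^sup>*" using column_rtrancl m_pos M_ge_2 by simp
  finally show ?thesis .
qed

lemma anchor_reaches:
  assumes "x \<in> split_edges m M"
  shows "((La, (0, M)), x) \<in> R\<^sup>*"
proof -
  obtain y k i where x: "x = (y, (k, i))" by (rule prod_cases3)
  have k: "k < m" "1 \<le> i" "i \<le> M" using assms by (simp_all add: x mem_split_edges)
  have "((La, (0, M)), (La, (k, 1))) \<in> R" by (rule top_La_to_bottom[OF m_pos k(1)])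
  also have "((La, (k, 1)), (y, (k, 1))) \<in> R\<^sup>*" by (rule bottoms_connected[OF k(1)])
  also have "((y, (k, 1)), x) \<in> R\<^sup>*" using column_rtrancl k by (simp add: x)
  finally show ?thesis .
qed

lemma anchor_closed_walk_M_minus_1: "((La, (0, M)), (La, (0, M))) \<in> R ^^ (M - 1)"
proof -
  have "((La, (0, 2)), (La, (0, 2 + (M - 2)))) \<in> R ^^ (M - 2)"
    by (rule column_relpow) (use m_pos M_ge_2 in auto)
  then have "((La, (0, 2)), (La, (0, M))) \<in> R ^^ (M - 2)"
    using M_ge_2 by (metis le_add_diff_inverse)
  with top_La_to_second[OF m_pos] have "((La, (0, M)), (La, (0, M))) \<in> R ^^ Suc (M - 2)"
    by (rule relpow_Suc_I2)
  moreover have "Suc (M - 2) = M - 1" using M_ge_2 by simp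
  ultimately show ?thesis by simp
qed

lemma anchor_closed_walk_M: "((La, (0, M)), (La, (0, M))) \<in> R ^^ Suc (M - 1)"
proof -
  have "((La, (0, 1)), (La, (0, 1 + (M - 1)))) \<in> R ^^ (M - 1)"
    by (rule column_relpow) (use m_pos M_ge_2 in auto)
  then have "((La, (0, 1)), (La, (0, M))) \<in> R ^^ (M - 1)" using M_ge_2 by simp
  with top_La_to_bottom[OF m_pos m_pos] show ?thesis by (rule relpow_Suc_I2)
qed

lemma mixing_split_img: "mixing (split_edges m M) (split_img M n0 e ord)"
  unfolding mixing_iff_relpow[OF finite_split_edges]
proof (rule relpow_total_if_consecutive_closed_walks
    [OF _ _ _ anchor_closed_walk_M_minus_1 anchor_closed_walk_M])
  show "finite R" by (rule finite_transition_rel[OF finite_split_edges])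
  show "(La, (0, M)) \<in> split_edges m M" using m_pos M_ge_2 by (simp add: mem_split_edges)
  show "split_edges m M \<times> split_edges m M \<subseteq> R\<^sup>*"
    using reaches_anchor anchor_reaches by (blast intro: rtrancl_trans)
qed

end

theorem mainTheorem8:
  fixes lam :: real and m N n0 p M :: nat
    and s :: "nat \<Rightarrow> real" and e :: "nat \<Rightarrow> nat \<Rightarrow> nat" and ord :: "nat \<Rightarrow> nat list"
  assumes "perron lam"
    and "m \<ge> 1"
    and "\<forall>k<m. s k \<in> ring_of_integers lam \<and> s k > 0"
    and "0 < n0" and "n0 < N"
    and "\<exists>y \<in> ring_of_integers lam. lam ^ N - lam ^ n0 = 2 * y"
    and "M = p * (N - n0) + N"
    and "\<forall>k<m. lam ^ M * s k =
            (\<Sum>i<m. (2 * real (e k i) + 2) * s i) + 2 * lam * s k + lam ^ n0 * s k"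
    and "\<forall>k<m. distinct (ord k) \<and> set (ord k) = {j. j < m \<and> j \<noteq> k}"
  shows "mixing (split_edges m M) (split_img M n0 e ord)"
proof -
  have "2 \<le> M" using assms(4,5,7) by linarith
  interpret split_star m M n0 e ord
    using assms(2,9) \<open>2 \<le> M\<close> by unfold_locales auto
  show ?thesis by (rule mixing_split_img)
qed

end
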